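(* Let $\mathcal{P}$ be a poset and $S\subseteq\mathcal{P}$ a finitely presented convex set. Then $\min S$ and $\operatorname{cover}S$ are finite, and $S=\uparrow\min S\setminus\uparrow\operatorname{cover}S$.
   Context: Fix a field $\mathbb{k}$. $\uparrow X=\{p:\exists x\in X,x\le p\}$; $\operatorname{cover}X=\min(\uparrow X\setminus X)$. $S$ is convex if $s\le p\le s'$ with $s,s'\in S$ implies $p\in S$. $\mathbb{k}_S$ is the indicator representation ($\mathbb{k}$ on $S$, $0$ elsewhere, identity maps within $S$). $S$ is finitely presented if $\mathbb{k}_S$ is the cokernel of a morphism between finite direct sums of representations $\mathbb{k}_{\uparrow\{p\}}$, $p\in\mathcal{P}$. *)

theory Defs
  imports Main
begin

(* Posets are types of class order; the poset P is UNIV :: 'p set. *)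

definition up_set :: "'p::order set \<Rightarrow> 'p set" where
  "up_set X = {p. \<exists>x\<in>X. x \<le> p}"

definition minimal_set :: "'p::order set \<Rightarrow> 'p set" where
  "minimal_set X = {s\<in>X. \<forall>t\<in>X. t \<le> s \<longrightarrow> t = s}"

definition cover_set :: "'p::order set \<Rightarrow> 'p set" where
  "cover_set X = minimal_set (up_set X - X)"

definition convex_set :: "'p::order set \<Rightarrow> bool" where
  "convex_set S \<longleftrightarrow> (\<forall>s\<in>S. \<forall>s'\<in>S. \<forall>p. s \<le> p \<and> p \<le> s' \<longrightarrow> p \<in> S)"

(* The finite direct sum  \<Oplus>_{i<n} k_{\<up>{p i}}  evaluated at the point x:
   realised as the k-vectors (nat \<Rightarrow> 'k) supported on {i < n. p i \<le> x};
   its structure maps (x \<le> y) are the inclusions. *)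
definition free_at :: "(nat \<Rightarrow> 'p::order) \<Rightarrow> nat \<Rightarrow> 'p \<Rightarrow> (nat \<Rightarrow> 'k::field) set" where
  "free_at p n x = {v. \<forall>i. v i \<noteq> 0 \<longrightarrow> i < n \<and> p i \<le> x}"

definition linear_on :: "(nat \<Rightarrow> 'k::field) set \<Rightarrow> ((nat \<Rightarrow> 'k) \<Rightarrow> 'b) \<Rightarrow> ('b \<Rightarrow> 'b \<Rightarrow> 'b) \<Rightarrow> ('k \<Rightarrow> 'b \<Rightarrow> 'b) \<Rightarrow> bool" where
  "linear_on V g ad sc \<longleftrightarrow>
     (\<forall>u\<in>V. \<forall>v\<in>V. g (\<lambda>i. u i + v i) = ad (g u) (g v)) \<and>
     (\<forall>u\<in>V. \<forall>c. g (\<lambda>i. c * u i) = sc c (g u))"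

(* A morphism of representations  \<Oplus>_{j<m} k_{\<up>{q j}} \<rightarrow> \<Oplus>_{i<n} k_{\<up>{p i}}:
   a family of linear maps f x, natural w.r.t. the structure maps (inclusions). *)
definition free_morphism ::
  "(nat \<Rightarrow> 'p::order) \<Rightarrow> nat \<Rightarrow> (nat \<Rightarrow> 'p) \<Rightarrow> nat \<Rightarrow> ('p \<Rightarrow> (nat \<Rightarrow> 'k::field) \<Rightarrow> (nat \<Rightarrow> 'k)) \<Rightarrow> bool" where
  "free_morphism q m p n f \<longleftrightarrow>
     (\<forall>x. (\<forall>v\<in>free_at q m x. f x v \<in> free_at p n x) \<and>
          linear_on (free_at q m x) (f x) (\<lambda>w w' i. w i + w' i) (\<lambda>c w i. c * w i)) \<and>
     (\<forall>x y v. x \<le> y \<longrightarrow> v \<in> free_at q m x \<longrightarrow> f y v = f x v)"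

(* Structure map k_S(x \<le> y) of the indicator representation k_S (k on S, 0 elsewhere). *)
definition ind_map :: "'p set \<Rightarrow> 'p \<Rightarrow> 'p \<Rightarrow> 'k::field \<Rightarrow> 'k" where
  "ind_map S x y c = (if x \<in> S \<and> y \<in> S then c else 0)"

(* k_S is the cokernel of f : \<Oplus>_{j<m} k_{\<up>{q j}} \<rightarrow> \<Oplus>_{i<n} k_{\<up>{p i}}:
   there is a morphism \<psi> from the codomain to k_S which is pointwise surjective
   and whose pointwise kernel is the pointwise image of f
   (i.e. F \<rightarrow> G \<rightarrow> k_S \<rightarrow> 0 is exact, so coker f \<cong> k_S). *)
definition cokernel_is_indicator ::
  "(nat \<Rightarrow> 'p::order) \<Rightarrow> nat \<Rightarrow> (nat \<Rightarrow> 'p) \<Rightarrow> nat \<Rightarrow> ('p \<Rightarrow> (nat \<Rightarrow> 'k::field) \<Rightarrow> (nat \<Rightarrow> 'k)) \<Rightarrow> 'p set \<Rightarrow> bool" where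
  "cokernel_is_indicator q m p n f S \<longleftrightarrow>
     (\<exists>\<psi> :: 'p \<Rightarrow> (nat \<Rightarrow> 'k) \<Rightarrow> 'k.
        (\<forall>x. linear_on (free_at p n x) (\<psi> x) (+) (*)) \<and>
        (\<forall>x. x \<notin> S \<longrightarrow> (\<forall>v\<in>free_at p n x. \<psi> x v = 0)) \<and>
        (\<forall>x y v. x \<le> y \<longrightarrow> v \<in> free_at p n x \<longrightarrow> \<psi> y v = ind_map S x y (\<psi> x v)) \<and>
        (\<forall>x. x \<in> S \<longrightarrow> (\<forall>c. \<exists>v\<in>free_at p n x. \<psi> x v = c)) \<and>
        (\<forall>x. {v\<in>free_at p n x. \<psi> x v = 0} = f x ` free_at q m x))"

definition finitely_presented :: "'k::field itself \<Rightarrow> 'p::order set \<Rightarrow> bool" where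
  "finitely_presented _ S \<longleftrightarrow>
     (\<exists>(q :: nat \<Rightarrow> 'p) m (p :: nat \<Rightarrow> 'p) n (f :: 'p \<Rightarrow> (nat \<Rightarrow> 'k) \<Rightarrow> (nat \<Rightarrow> 'k)).
        free_morphism q m p n f \<and> cokernel_is_indicator q m p n f S)"

end

theory Submission
  imports Defs
begin

(* Let \<psi> : G \<rightarrow> k_S be the cokernel map of f : F \<rightarrow> G, with G generated by e_i in degree p_i
   and F by e_j in degree q_j.  For s \<in> S, \<psi>_s is onto k, so some e_i with p_i \<le> s is not
   killed, and naturality of \<psi> into k_S forces p_i \<in> S: the finitely many generators lying
   in S generate S upwards.  Dually, for x \<in> \<up>S - S pick s \<le> x in S and v with \<psi>_s v = 1;
   its image at x lies in ker \<psi>_x = im f_x.  The values of \<psi> at the generators in S glue to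
   one functional on G that agrees with \<psi> over S and vanishes over points outside \<up>S, so
   it kills every relation e_j with q_j \<notin> \<up>S - S, but not v: some relation q_j \<le> x lies in
   \<up>S - S.  A finite set generating a set upwards contains its minimal elements, and
   convexity separates S from \<up>(cover S). *)

definition unit_vec :: "nat \<Rightarrow> nat \<Rightarrow> 'k::field" where
  "unit_vec i = (\<lambda>j. if j = i then 1 else 0)"

lemma unit_vec_in_free_at: "i < n \<Longrightarrow> p i \<le> x \<Longrightarrow> unit_vec i \<in> free_at p n x"
  by (auto simp: unit_vec_def free_at_def)

lemma free_at_mono: "x \<le> y \<Longrightarrow> free_at p n x \<subseteq> free_at p n y"
  by (auto simp: free_at_def intro: order_trans)

lemma free_at_support: "u \<in> free_at p n x \<Longrightarrow> u i \<noteq> 0 \<Longrightarrow> i < n \<and> p i \<le> x"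
  by (simp add: free_at_def)

lemma linear_on_expansion:
  fixes g :: "(nat \<Rightarrow> 'k::field) \<Rightarrow> 'k"
  assumes lin: "linear_on (free_at p n x) g (+) (*)" and u: "u \<in> free_at p n x"
  shows "g u = (\<Sum>i<n. u i * g (unit_vec i))"
proof -
  have add: "g (\<lambda>i. a i + b i) = g a + g b"
    if "a \<in> free_at p n x" "b \<in> free_at p n x" for a b
    using lin that unfolding linear_on_def by blast
  have scale: "g (\<lambda>i. c * a i) = c * g a" if "a \<in> free_at p n x" for a c
    using lin that unfolding linear_on_def by blast
  have expansion: "g u = (\<Sum>i<k. u i * g (unit_vec i))"
    if "u \<in> free_at p n x" "\<forall>i\<ge>k. u i = 0" for k u
    using that
  proof (induction k arbitrary: u)
    case 0
    then have "u = (\<lambda>i. 0 * u i)" by auto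
    then show ?case using scale[OF "0.prems"(1), of 0] by simp
  next
    case (Suc k)
    show ?case
    proof (cases "u k = 0")
      case True
      then have "\<forall>i\<ge>k. u i = 0" using Suc.prems(2) by (metis Suc_leI le_neq_implies_less)
      then show ?thesis using Suc.IH[OF Suc.prems(1)] True by simp
    next
      case False
      define u' where "u' = u(k := 0)"
      have u': "u' \<in> free_at p n x" using Suc.prems(1) by (auto simp: u'_def free_at_def)
      have e: "unit_vec k \<in> free_at p n x"
        using free_at_support[OF Suc.prems(1) False] by (blast intro: unit_vec_in_free_at)
      have "u = (\<lambda>i. u' i + u k * unit_vec k i)" by (auto simp: u'_def unit_vec_def)
      moreover have "(\<lambda>i. u k * unit_vec k i) \<in> free_at p n x"
        using e by (auto simp: free_at_def)
      ultimately have "g u = g u' + u k * g (unit_vec k)"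
        using add[OF u'] scale[OF e] by metis
      moreover have "\<forall>i\<ge>k. u' i = 0"
        using Suc.prems(2) by (simp add: u'_def Suc_le_eq)
      then have "g u' = (\<Sum>i<k. u' i * g (unit_vec i))"
        using Suc.IH[OF u'] by blast
      also have "\<dots> = (\<Sum>i<k. u i * g (unit_vec i))"
        by (simp add: u'_def)
      finally show ?thesis by simp
    qed
  qed
  have "\<forall>i\<ge>n. u i = 0" using u by (auto simp: free_at_def)
  with u show ?thesis by (rule expansion)
qed

lemma minimal_set_subset_generators:
  fixes Q B :: "'p::order set"
  assumes "Q \<subseteq> B" "B \<subseteq> up_set Q"
  shows "minimal_set B \<subseteq> Q"
  using assms unfolding minimal_set_def up_set_def by blast

lemma subset_up_set_minimal_set:
  fixes Q B :: "'p::order set"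
  assumes Q: "finite Q" "Q \<subseteq> B" and B: "B \<subseteq> up_set Q"
  shows "B \<subseteq> up_set (minimal_set B)"
proof
  fix x assume "x \<in> B"
  then have "{c\<in>Q. c \<le> x} \<noteq> {}" using B by (auto simp: up_set_def)
  then obtain c where c: "c \<in> Q" "c \<le> x" and c_min: "\<And>d. d \<in> Q \<Longrightarrow> d \<le> x \<Longrightarrow> d \<le> c \<Longrightarrow> d = c"
    using finite_has_minimal[of "{c\<in>Q. c \<le> x}"] Q(1) by force
  have "c \<in> minimal_set B"
    unfolding minimal_set_def
  proof (intro CollectI conjI ballI impI)
    show "c \<in> B" using c Q(2) by blast
    fix t assume t: "t \<in> B" "t \<le> c"
    then obtain d where "d \<in> Q" "d \<le> t" using B by (auto simp: up_set_def)
    with t c c_min[of d] show "t = c" by (metis order_antisym order_trans)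
  qed
  with c show "x \<in> up_set (minimal_set B)" by (auto simp: up_set_def)
qed

lemma convex_set_eq_up_set_diff:
  fixes S :: "'p::order set"
  assumes convex: "convex_set S"
    and min: "S \<subseteq> up_set (minimal_set S)"
    and cover: "up_set S - S \<subseteq> up_set (cover_set S)"
  shows "S = up_set (minimal_set S) - up_set (cover_set S)"
proof
  have "s \<notin> up_set (cover_set S)" if "s \<in> S" for s
  proof
    assume "s \<in> up_set (cover_set S)"
    then obtain c s' where "c \<le> s" "c \<notin> S" "s' \<in> S" "s' \<le> c"
      by (auto simp: up_set_def cover_set_def minimal_set_def)
    with \<open>s \<in> S\<close> convex show False unfolding convex_set_def by blast
  qed
  with min show "S \<subseteq> up_set (minimal_set S) - up_set (cover_set S)" by blast
next
  have "up_set (minimal_set S) \<subseteq> up_set S"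
    by (auto simp: up_set_def minimal_set_def)
  with cover show "up_set (minimal_set S) - up_set (cover_set S) \<subseteq> S" by blast
qed

definition glued_functional ::
  "'p set \<Rightarrow> ('p \<Rightarrow> (nat \<Rightarrow> 'k::field) \<Rightarrow> 'k) \<Rightarrow> (nat \<Rightarrow> 'p) \<Rightarrow> nat \<Rightarrow> (nat \<Rightarrow> 'k) \<Rightarrow> 'k" where
  "glued_functional S \<psi> p n u = (\<Sum>i<n. if p i \<in> S then u i * \<psi> (p i) (unit_vec i) else 0)"

lemma glued_functional_add:
  "glued_functional S \<psi> p n (\<lambda>i. a i + b i) = glued_functional S \<psi> p n a + glued_functional S \<psi> p n b"
  unfolding glued_functional_def
  by (simp add: sum.distrib[symmetric] distrib_right if_distrib cong: if_cong)

lemma glued_functional_scale: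
  "glued_functional S \<psi> p n (\<lambda>i. c * a i) = c * glued_functional S \<psi> p n a"
  unfolding glued_functional_def
  by (simp add: sum_distrib_left mult.assoc if_distrib cong: if_cong)

lemma glued_functional_nonzero:
  assumes "glued_functional S \<psi> p n u \<noteq> 0"
  obtains i where "i < n" "p i \<in> S" "u i \<noteq> 0"
proof -
  obtain i where "i < n" "(if p i \<in> S then u i * \<psi> (p i) (unit_vec i) else 0) \<noteq> 0"
    using assms unfolding glued_functional_def by (auto elim: sum.not_neutral_contains_not_neutral)
  then show thesis using that by (simp split: if_splits)
qed

lemma glued_functional_outside_up_set:
  assumes u: "u \<in> free_at p n y" and y: "y \<notin> up_set S"
  shows "glued_functional S \<psi> p n u = 0"
proof (rule ccontr)
  assume "glued_functional S \<psi> p n u \<noteq> 0"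
  then obtain i where "p i \<in> S" "u i \<noteq> 0" by (rule glued_functional_nonzero)
  with u have "y \<in> up_set S" unfolding up_set_def by (blast dest: free_at_support)
  with y show False ..
qed

lemma free_morphism_natural:
  "free_morphism q m p n f \<Longrightarrow> x \<le> y \<Longrightarrow> v \<in> free_at q m x \<Longrightarrow> f y v = f x v"
  by (simp add: free_morphism_def)

lemma glued_functional_comp_linear:
  assumes "free_morphism q m p n f"
  shows "linear_on (free_at q m x) (\<lambda>w. glued_functional S \<psi> p n (f x w)) (+) (*)"
  using assms unfolding free_morphism_def linear_on_def
  by (simp add: glued_functional_add glued_functional_scale)

context
  fixes S :: "'p::order set" and p :: "nat \<Rightarrow> 'p" and n :: nat
    and \<psi> :: "'p \<Rightarrow> (nat \<Rightarrow> 'k::field) \<Rightarrow> 'k"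
  assumes psi_linear: "\<And>x. linear_on (free_at p n x) (\<psi> x) (+) (*)"
    and psi_natural: "\<And>x y v. x \<le> y \<Longrightarrow> v \<in> free_at p n x \<Longrightarrow> \<psi> y v = ind_map S x y (\<psi> x v)"
begin

lemma psi_unit_vec:
  assumes "i < n" "p i \<le> y" "y \<in> S"
  shows "\<psi> y (unit_vec i) = (if p i \<in> S then \<psi> (p i) (unit_vec i) else 0)"
  using psi_natural[OF assms(2) unit_vec_in_free_at[OF assms(1) order_refl]] assms(3)
  by (simp add: ind_map_def)

lemma glued_functional_eq_psi:
  assumes y: "y \<in> S" and u: "u \<in> free_at p n y"
  shows "glued_functional S \<psi> p n u = \<psi> y u"
proof -
  have "\<psi> y u = (\<Sum>i<n. u i * \<psi> y (unit_vec i))"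
    using linear_on_expansion[OF psi_linear u] .
  also have "\<dots> = glued_functional S \<psi> p n u"
    unfolding glued_functional_def
  proof (rule sum.cong)
    fix i assume i: "i \<in> {..<n}"
    show "u i * \<psi> y (unit_vec i) = (if p i \<in> S then u i * \<psi> (p i) (unit_vec i) else 0)"
    proof (cases "u i = 0")
      case False
      with u have "p i \<le> y" by (blast dest: free_at_support)
      with i y show ?thesis using psi_unit_vec[of i y] by simp
    qed simp
  qed simp
  finally show ?thesis by simp
qed

lemma glued_functional_kernel:
  assumes "u \<in> free_at p n y" "\<psi> y u = 0" "y \<notin> up_set S - S"
  shows "glued_functional S \<psi> p n u = 0"
proof (cases "y \<in> S")
  case True
  show ?thesis using glued_functional_eq_psi[OF True assms(1)] assms(2) by simp
next
  case False
  with assms(3) have "y \<notin> up_set S" by blast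
  with assms(1) show ?thesis by (rule glued_functional_outside_up_set)
qed

lemma subset_up_generators:
  assumes onto: "\<And>x c. x \<in> S \<Longrightarrow> \<exists>v\<in>free_at p n x. \<psi> x v = c"
  shows "S \<subseteq> up_set (p ` {i. i < n \<and> p i \<in> S})"
proof
  fix s assume s: "s \<in> S"
  obtain v where v: "v \<in> free_at p n s" "\<psi> s v = 1" using onto[OF s] by blast
  then have "glued_functional S \<psi> p n v \<noteq> 0"
    using glued_functional_eq_psi[OF s] by simp
  then obtain i where "i < n" "p i \<in> S" "v i \<noteq> 0" by (rule glued_functional_nonzero)
  moreover from v(1) \<open>v i \<noteq> 0\<close> have "p i \<le> s" by (blast dest: free_at_support)
  ultimately show "s \<in> up_set (p ` {i. i < n \<and> p i \<in> S})"
    unfolding up_set_def by blast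
qed

lemma up_set_diff_subset_up_relations:
  assumes fm: "free_morphism q m p n f"
    and onto: "\<And>x c. x \<in> S \<Longrightarrow> \<exists>v\<in>free_at p n x. \<psi> x v = c"
    and ker: "\<And>x. {v\<in>free_at p n x. \<psi> x v = 0} = f x ` free_at q m x"
  shows "up_set S - S \<subseteq> up_set (q ` {j. j < m \<and> q j \<in> up_set S - S})"
proof
  fix x assume x: "x \<in> up_set S - S"
  let ?\<Lambda> = "glued_functional S \<psi> p n"
  obtain s where s: "s \<in> S" "s \<le> x" using x by (auto simp: up_set_def)
  obtain v where v: "v \<in> free_at p n s" "\<psi> s v = 1" using onto[OF s(1)] by blast
  have "v \<in> free_at p n x" using free_at_mono[OF s(2)] v(1) by blast
  moreover have "\<psi> x v = 0" using psi_natural[OF s(2) v(1)] x by (simp add: ind_map_def)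
  ultimately obtain w where w: "w \<in> free_at q m x" "v = f x w" using ker[of x] by blast
  have "(\<Sum>j<m. w j * ?\<Lambda> (f x (unit_vec j))) = ?\<Lambda> (f x w)"
    using linear_on_expansion[OF glued_functional_comp_linear[OF fm] w(1)] by simp
  also have "\<dots> = \<psi> s v" using glued_functional_eq_psi[OF s(1) v(1)] w(2) by simp
  finally have "(\<Sum>j<m. w j * ?\<Lambda> (f x (unit_vec j))) \<noteq> 0" using v(2) by simp
  then obtain j where "j \<in> {..<m}" "w j * ?\<Lambda> (f x (unit_vec j)) \<noteq> 0"
    by (rule sum.not_neutral_contains_not_neutral)
  then have j: "j < m" "w j \<noteq> 0" "?\<Lambda> (f x (unit_vec j)) \<noteq> 0" by auto
  have qj: "q j \<le> x" using free_at_support[OF w(1) j(2)] by blast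
  have e: "unit_vec j \<in> free_at q m (q j)" using unit_vec_in_free_at[OF j(1) order_refl] .
  have "?\<Lambda> (f (q j) (unit_vec j)) \<noteq> 0"
    using j(3) free_morphism_natural[OF fm qj e] by simp
  moreover have "f (q j) (unit_vec j) \<in> free_at p n (q j)" "\<psi> (q j) (f (q j) (unit_vec j)) = 0"
    using ker[of "q j"] e by blast+
  ultimately have "q j \<in> up_set S - S"
    by (blast dest: glued_functional_kernel)
  with j(1) qj show "x \<in> up_set (q ` {j. j < m \<and> q j \<in> up_set S - S})"
    unfolding up_set_def by blast
qed

end

lemma cokernel_is_indicatorE:
  fixes f :: "'p::order \<Rightarrow> (nat \<Rightarrow> 'k::field) \<Rightarrow> (nat \<Rightarrow> 'k)"
  assumes "cokernel_is_indicator q m p n f S"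
  obtains \<psi> :: "'p \<Rightarrow> (nat \<Rightarrow> 'k) \<Rightarrow> 'k"
  where "\<And>x. linear_on (free_at p n x) (\<psi> x) (+) (*)"
    and "\<And>x y v. x \<le> y \<Longrightarrow> v \<in> free_at p n x \<Longrightarrow> \<psi> y v = ind_map S x y (\<psi> x v)"
    and "\<And>x c. x \<in> S \<Longrightarrow> \<exists>v\<in>free_at p n x. \<psi> x v = c"
    and "\<And>x. {v\<in>free_at p n x. \<psi> x v = 0} = f x ` free_at q m x"
proof -
  obtain \<psi> :: "'p \<Rightarrow> (nat \<Rightarrow> 'k) \<Rightarrow> 'k" where
    lin: "\<forall>x. linear_on (free_at p n x) (\<psi> x) (+) (*)"
    and "\<forall>x. x \<notin> S \<longrightarrow> (\<forall>v\<in>free_at p n x. \<psi> x v = 0)"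
    and nat: "\<forall>x y v. x \<le> y \<longrightarrow> v \<in> free_at p n x \<longrightarrow> \<psi> y v = ind_map S x y (\<psi> x v)"
    and onto: "\<forall>x. x \<in> S \<longrightarrow> (\<forall>c. \<exists>v\<in>free_at p n x. \<psi> x v = c)"
    and ker: "\<forall>x. {v\<in>free_at p n x. \<psi> x v = 0} = f x ` free_at q m x"
    using assms unfolding cokernel_is_indicator_def by (elim exE conjE) (rule that)
  show thesis by (rule that[OF lin[rule_format] nat[rule_format] onto[rule_format] ker[rule_format]])
qed

theorem mainTheorem17:
  fixes S :: "'p::order set"
  assumes "finitely_presented TYPE('k::field) S"
    and "convex_set S"
  shows "finite (minimal_set S) \<and> finite (cover_set S)
         \<and> S = up_set (minimal_set S) - up_set (cover_set S)"
proof -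
  obtain q m p n and f :: "'p \<Rightarrow> (nat \<Rightarrow> 'k) \<Rightarrow> (nat \<Rightarrow> 'k)" where
    fm: "free_morphism q m p n f" and ck: "cokernel_is_indicator q m p n f S"
    using assms(1) unfolding finitely_presented_def by blast
  from ck obtain \<psi> where lin: "\<And>x. linear_on (free_at p n x) (\<psi> x) (+) (*)"
    and nat: "\<And>x y v. x \<le> y \<Longrightarrow> v \<in> free_at p n x \<Longrightarrow> \<psi> y v = ind_map S x y (\<psi> x v)"
    and onto: "\<And>x c. x \<in> S \<Longrightarrow> \<exists>v\<in>free_at p n x. \<psi> x v = c"
    and ker: "\<And>x. {v\<in>free_at p n x. \<psi> x v = 0} = f x ` free_at q m x"
    by (erule cokernel_is_indicatorE)
  define P where "P = p ` {i. i < n \<and> p i \<in> S}"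
  define Q where "Q = q ` {j. j < m \<and> q j \<in> up_set S - S}"
  have P: "finite P" "P \<subseteq> S" "S \<subseteq> up_set P"
    using subset_up_generators[OF lin nat onto] unfolding P_def by auto
  have Q: "finite Q" "Q \<subseteq> up_set S - S" "up_set S - S \<subseteq> up_set Q"
    using up_set_diff_subset_up_relations[OF lin nat fm onto ker] unfolding Q_def by auto
  have "finite (minimal_set S)"
    using minimal_set_subset_generators[OF P(2,3)] P(1) by (rule finite_subset)
  moreover have "finite (cover_set S)"
    using minimal_set_subset_generators[OF Q(2,3)] Q(1) unfolding cover_set_def by (rule finite_subset)
  moreover have "S = up_set (minimal_set S) - up_set (cover_set S)"
    using assms(2) subset_up_set_minimal_set[OF P]
      subset_up_set_minimal_set[OF Q, folded cover_set_def]
    by (rule convex_set_eq_up_set_diff)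
  ultimately show ?thesis by blast
qed

end
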